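(* Fix $\beta>2$. Let $G_\beta(x)=\frac1\beta\log x-\frac32x$ for $x>0$, $l_\beta=2/(3\beta)$, $g_\beta=G_\beta(l_\beta)$. For $y<g_\beta$ let $H_\beta(y)<l_\beta<K_\beta(y)$ be the two solutions of $G_\beta(x)=y$, and set $H_\beta(g_\beta)=K_\beta(g_\beta)=l_\beta$. For $k=1,2$ let $S_\beta^{(k)}:(-\infty,g_\beta]\to\mathbb{R}$, $S_\beta^{(k)}(y)=kH_\beta(y)+K_\beta(y)$. Then: (1) $S_\beta^{(1)}$ is decreasing on $(-\infty,g_\beta]$; (2) there exists $\tilde g_\beta<g_\beta$ such that $S_\beta^{(2)}$ is decreasing on $(-\infty,\tilde g_\beta)$ and increasing on $(\tilde g_\beta,g_\beta]$.
   Context: $G_\beta$ is increasing on $(0,l_\beta)$, decreasing on $(l_\beta,\infty)$, and tends to $-\infty$ at $0$ and at $\infty$, so $H_\beta$ and $K_\beta$ are well defined, continuous, $H_\beta$ increasing and $K_\beta$ decreasing on $(-\infty,g_\beta]$. *)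

theory Defs
  imports "HOL-Analysis.Analysis"
begin

definition G :: "real \<Rightarrow> real \<Rightarrow> real" where
  "G \<beta> x = (1/\<beta>) * ln x - (3/2) * x"

definition l :: "real \<Rightarrow> real" where
  "l \<beta> = 2 / (3 * \<beta>)"

definition g :: "real \<Rightarrow> real" where
  "g \<beta> = G \<beta> (l \<beta>)"

definition H :: "real \<Rightarrow> real \<Rightarrow> real" where
  "H \<beta> y = (THE x. 0 < x \<and> x \<le> l \<beta> \<and> G \<beta> x = y)"

definition K :: "real \<Rightarrow> real \<Rightarrow> real" where
  "K \<beta> y = (THE x. l \<beta> \<le> x \<and> G \<beta> x = y)"

definition S :: "real \<Rightarrow> real \<Rightarrow> real \<Rightarrow> real" where
  "S k \<beta> y = k * H \<beta> y + K \<beta> y"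

end

theory Submission
  imports Defs "HOL-Real_Asymp.Real_Asymp"
begin

(* Writing x = l w turns G x = y into ln w - w = \<beta> (y - g) - 1, so H y = l a and K y = l b with
   0 < a \<le> 1 \<le> b and ln a - a = ln b - b.  The ratio t = K/H = b/a falls strictly from \<infinity> to 1 as
   y rises to g, and ln t = b - a = a (t - 1) gives S k y = l chi k t with
   chi k t = (k + t) ln t / (t - 1).  Now chi 1 increases in t, whereas chi 2 decreases up to the
   unique zero t0 > 1 of the numerator of its derivative and increases after it; the turning level
   is the y with K/H = t0. *)

lemma strict_mono_on_if_deriv_pos:
  fixes f :: "real \<Rightarrow> real"
  assumes I: "is_interval I" and cont: "continuous_on I f"
    and deriv: "\<And>x. x \<in> interior I \<Longrightarrow> \<exists>d. (f has_real_derivative d) (at x) \<and> d > 0"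
  shows "strict_mono_on I f"
proof (rule strict_mono_onI)
  fix s t assume st: "s \<in> I" "t \<in> I" "s < t"
  have sub: "{s..t} \<subseteq> I" using I st unfolding is_interval_1 atLeastAtMost_iff subset_iff by blast
  have "{s<..<t} \<subseteq> interior I" using sub by (intro interior_maximal) auto
  then show "f s < f t"
    using st continuous_on_subset[OF cont sub] deriv
    by (intro DERIV_pos_imp_increasing_open[of s t f]) auto
qed

lemma strict_antimono_on_if_deriv_neg:
  fixes f :: "real \<Rightarrow> real"
  assumes I: "is_interval I" and cont: "continuous_on I f"
    and deriv: "\<And>x. x \<in> interior I \<Longrightarrow> \<exists>d. (f has_real_derivative d) (at x) \<and> d < 0"
  shows "strict_antimono_on I f"
proof (rule monotone_onI)
  fix s t assume st: "s \<in> I" "t \<in> I" "s < t"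
  have sub: "{s..t} \<subseteq> I" using I st unfolding is_interval_1 atLeastAtMost_iff subset_iff by blast
  have "{s<..<t} \<subseteq> interior I" using sub by (intro interior_maximal) auto
  then show "f s > f t"
    using st continuous_on_subset[OF cont sub] deriv
    by (intro DERIV_neg_imp_decreasing_open[of s t f]) auto
qed

lemma ln_minus_strict_mono_on: "strict_mono_on {0<..1} (\<lambda>w::real. ln w - w)"
proof (rule strict_mono_on_if_deriv_pos)
  fix x :: real assume "x \<in> interior {0<..1}"
  then have "0 < x" "x < 1" by auto
  then show "\<exists>d. ((\<lambda>w. ln w - w) has_real_derivative d) (at x) \<and> d > 0"
    by (intro exI[of _ "1/x - 1"]) (auto intro!: derivative_eq_intros)
qed (auto simp: is_interval_1 intro!: continuous_intros)

lemma ln_minus_strict_antimono_on: "strict_antimono_on {1..} (\<lambda>w::real. ln w - w)"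
proof (rule strict_antimono_on_if_deriv_neg)
  fix x :: real assume "x \<in> interior {1..}"
  then have "1 < x" by auto
  then show "\<exists>d. ((\<lambda>w. ln w - w) has_real_derivative d) (at x) \<and> d < 0"
    by (intro exI[of _ "1/x - 1"]) (auto intro!: derivative_eq_intros)
qed (auto intro!: continuous_intros)

lemma ln_minus_attains_below_one:
  assumes "c \<le> (-1::real)"
  obtains w where "0 < w" "w \<le> 1" "ln w - w = c"
proof -
  have "continuous_on {exp c..1} (\<lambda>t::real. ln t - t)"
    by (intro continuous_intros) auto
  then obtain w where "exp c \<le> w" "w \<le> 1" "ln w - w = c"
    using IVT'[of "\<lambda>t. ln t - t" "exp c" c 1] assms by auto
  moreover have "0 < w" using \<open>exp c \<le> w\<close> exp_gt_zero[of c] by linarith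
  ultimately show thesis using that by blast
qed

lemma ln_minus_attains_above_one:
  assumes c: "c \<le> (-1::real)"
  obtains w where "1 \<le> w" "ln w - w = c"
proof -
  have "ln (2 * -c) - 2 * -c \<le> c"
    using c ln_mult_pos[of 2 "-c"] ln_le_minus_one[of "-c"] ln_2_less_1 by simp
  moreover have "continuous_on {1..2 * -c} (\<lambda>t::real. ln t - t)"
    by (intro continuous_intros) auto
  ultimately show thesis
    using IVT2'[of "\<lambda>t. ln t - t" "2 * -c" c 1] c that by auto
qed

lemma l_pos: "\<beta> > 0 \<Longrightarrow> l \<beta> > 0"
  by (simp add: l_def)

lemma G_l_mult:
  assumes "\<beta> > 0" "w > 0"
  shows "G \<beta> (l \<beta> * w) = g \<beta> + (ln w - w + 1) / \<beta>"
proof -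
  have "ln (2 / (3 * \<beta>) * w) = ln (2 / (3 * \<beta>)) + ln w"
    using assms by (intro ln_mult_pos) auto
  then show ?thesis
    unfolding g_def G_def l_def using assms by (simp add: field_simps)
qed

lemma H_G_l_mult:
  assumes \<beta>: "\<beta> > 0" and w: "0 < w" "w \<le> 1"
  shows "H \<beta> (G \<beta> (l \<beta> * w)) = l \<beta> * w"
  unfolding H_def
proof (rule the_equality)
  show "0 < l \<beta> * w \<and> l \<beta> * w \<le> l \<beta> \<and> G \<beta> (l \<beta> * w) = G \<beta> (l \<beta> * w)"
    using l_pos[OF \<beta>] w by (simp add: mult_left_le)
  fix x assume x: "0 < x \<and> x \<le> l \<beta> \<and> G \<beta> x = G \<beta> (l \<beta> * w)"
  define v where "v = x / l \<beta>"
  have x_eq: "x = l \<beta> * v" using l_pos[OF \<beta>] by (simp add: v_def)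
  have v: "v \<in> {0<..1}" using x l_pos[OF \<beta>] by (auto simp: v_def)
  have "ln v - v = ln w - w" using x G_l_mult[OF \<beta>] v w \<beta> x_eq by simp
  then have "v = w"
    using strict_mono_on_imp_inj_on[OF ln_minus_strict_mono_on] v w by (auto dest: inj_onD)
  then show "x = l \<beta> * w" using x_eq by simp
qed

lemma K_G_l_mult:
  assumes \<beta>: "\<beta> > 0" and w: "1 \<le> w"
  shows "K \<beta> (G \<beta> (l \<beta> * w)) = l \<beta> * w"
  unfolding K_def
proof (rule the_equality)
  show "l \<beta> \<le> l \<beta> * w \<and> G \<beta> (l \<beta> * w) = G \<beta> (l \<beta> * w)"
    using l_pos[OF \<beta>] w by simp
  fix x assume x: "l \<beta> \<le> x \<and> G \<beta> x = G \<beta> (l \<beta> * w)"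
  define v where "v = x / l \<beta>"
  have x_eq: "x = l \<beta> * v" using l_pos[OF \<beta>] by (simp add: v_def)
  have v: "1 \<le> v" using x l_pos[OF \<beta>] by (auto simp: v_def)
  have "ln v - v = ln w - w" using x G_l_mult[OF \<beta>] v w \<beta> x_eq by simp
  then have "v = w"
    using monotone_onD[OF ln_minus_strict_antimono_on, of v w]
      monotone_onD[OF ln_minus_strict_antimono_on, of w v] v w
    by (cases v w rule: linorder_cases) auto
  then show "x = l \<beta> * w" using x_eq by simp
qed

lemma H_K_normal_form:
  assumes \<beta>: "\<beta> > 0" and y: "y \<le> g \<beta>"
  obtains a b where "0 < a" "a \<le> 1" "1 \<le> b" "ln b - b = ln a - a"
    "y = g \<beta> + (ln a - a + 1) / \<beta>" "H \<beta> y = l \<beta> * a" "K \<beta> y = l \<beta> * b"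
proof -
  define c where "c = \<beta> * (y - g \<beta>) - 1"
  have c: "c \<le> -1" using \<beta> y by (simp add: c_def mult_nonneg_nonpos)
  have y_eq: "y = g \<beta> + (c + 1) / \<beta>" using \<beta> by (simp add: c_def)
  obtain a where a: "0 < a" "a \<le> 1" "ln a - a = c" using ln_minus_attains_below_one[OF c] .
  obtain b where b: "1 \<le> b" "ln b - b = c" using ln_minus_attains_above_one[OF c] .
  have "H \<beta> y = l \<beta> * a" using H_G_l_mult[OF \<beta> a(1,2)] G_l_mult[OF \<beta> a(1)] a y_eq by simp
  moreover have "K \<beta> y = l \<beta> * b" using K_G_l_mult[OF \<beta> b(1)] G_l_mult[OF \<beta>] b y_eq by simp
  ultimately show thesis using that a b y_eq by simp
qed

lemma H_pos:
  assumes "\<beta> > 0" "y \<le> g \<beta>"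
  shows "H \<beta> y > 0"
proof -
  obtain a where "0 < a" "H \<beta> y = l \<beta> * a" using H_K_normal_form[OF assms] by blast
  then show ?thesis using l_pos[OF assms(1)] by simp
qed

lemma K_pos:
  assumes "\<beta> > 0" "y \<le> g \<beta>"
  shows "K \<beta> y > 0"
proof -
  obtain b where "1 \<le> b" "K \<beta> y = l \<beta> * b" using H_K_normal_form[OF assms] by blast
  then show ?thesis using l_pos[OF assms(1)] by simp
qed

lemma H_K_at_g: "\<beta> > 0 \<Longrightarrow> H \<beta> (g \<beta>) = l \<beta> \<and> K \<beta> (g \<beta>) = l \<beta>"
  using H_G_l_mult[of \<beta> 1] K_G_l_mult[of \<beta> 1] by (simp add: g_def)

lemma H_strict_mono_on:
  assumes \<beta>: "\<beta> > 0"
  shows "strict_mono_on {..g \<beta>} (H \<beta>)"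
proof (rule strict_mono_onI)
  fix y1 y2 assume y: "y1 \<in> {..g \<beta>}" "y2 \<in> {..g \<beta>}" "y1 < y2"
  obtain a1 b1 where 1: "0 < a1" "a1 \<le> 1" "y1 = g \<beta> + (ln a1 - a1 + 1) / \<beta>" "H \<beta> y1 = l \<beta> * a1"
    using H_K_normal_form[OF \<beta>, of y1] y by (metis atMost_iff)
  obtain a2 b2 where 2: "0 < a2" "a2 \<le> 1" "y2 = g \<beta> + (ln a2 - a2 + 1) / \<beta>" "H \<beta> y2 = l \<beta> * a2"
    using H_K_normal_form[OF \<beta>, of y2] y by (metis atMost_iff)
  have "ln a1 - a1 < ln a2 - a2" using 1 2 y \<beta> by (simp add: divide_less_cancel)
  then have "a1 < a2"
    using strict_mono_on_leD[OF ln_minus_strict_mono_on, of a2 a1] 1 2 by force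
  then show "H \<beta> y1 < H \<beta> y2" using 1(4) 2(4) l_pos[OF \<beta>] by simp
qed

lemma K_strict_antimono_on:
  assumes \<beta>: "\<beta> > 0"
  shows "strict_antimono_on {..g \<beta>} (K \<beta>)"
proof (rule monotone_onI)
  fix y1 y2 assume y: "y1 \<in> {..g \<beta>}" "y2 \<in> {..g \<beta>}" "y1 < y2"
  obtain a1 b1 where 1: "1 \<le> b1" "ln b1 - b1 = ln a1 - a1" "y1 = g \<beta> + (ln a1 - a1 + 1) / \<beta>"
      "K \<beta> y1 = l \<beta> * b1"
    using H_K_normal_form[OF \<beta>, of y1] y by (metis atMost_iff)
  obtain a2 b2 where 2: "1 \<le> b2" "ln b2 - b2 = ln a2 - a2" "y2 = g \<beta> + (ln a2 - a2 + 1) / \<beta>"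
      "K \<beta> y2 = l \<beta> * b2"
    using H_K_normal_form[OF \<beta>, of y2] y by (metis atMost_iff)
  have "ln b1 - b1 < ln b2 - b2" using 1 2 y \<beta> by (simp add: divide_less_cancel)
  then have "b2 < b1"
    using monotone_onD[OF ln_minus_strict_antimono_on, of b1 b2] 1 2
    by (cases b1 b2 rule: linorder_cases) auto
  then show "K \<beta> y1 > K \<beta> y2" using 1(4) 2(4) l_pos[OF \<beta>] by simp
qed

definition ratio :: "real \<Rightarrow> real \<Rightarrow> real" where
  "ratio \<beta> y = K \<beta> y / H \<beta> y"

lemma ratio_strict_antimono_on:
  assumes \<beta>: "\<beta> > 0"
  shows "strict_antimono_on {..g \<beta>} (ratio \<beta>)"
proof (rule monotone_onI)
  fix y1 y2 assume y: "y1 \<in> {..g \<beta>}" "y2 \<in> {..g \<beta>}" "y1 < y2"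
  have H: "0 < H \<beta> y1" "H \<beta> y1 < H \<beta> y2"
    using H_pos[OF \<beta>] strict_mono_onD[OF H_strict_mono_on[OF \<beta>]] y by auto
  have K: "0 < K \<beta> y2" "K \<beta> y2 < K \<beta> y1"
    using K_pos[OF \<beta>] monotone_onD[OF K_strict_antimono_on[OF \<beta>]] y by auto
  have "K \<beta> y2 / H \<beta> y2 < K \<beta> y2 / H \<beta> y1"
    using H K by (intro divide_strict_left_mono) auto
  also have "\<dots> < K \<beta> y1 / H \<beta> y1"
    using H K by (intro divide_strict_right_mono) auto
  finally show "ratio \<beta> y1 > ratio \<beta> y2" by (simp add: ratio_def)
qed

lemma ratio_at_g: "\<beta> > 0 \<Longrightarrow> ratio \<beta> (g \<beta>) = 1"
  using H_K_at_g[of \<beta>] l_pos[of \<beta>] by (simp add: ratio_def)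

lemma ratio_ge_one:
  assumes \<beta>: "\<beta> > 0" and y: "y \<le> g \<beta>"
  shows "1 \<le> ratio \<beta> y"
  using monotone_onD[OF ratio_strict_antimono_on[OF \<beta>], of y "g \<beta>"] ratio_at_g[OF \<beta>] y
  by (cases "y = g \<beta>") auto

text \<open>For \<open>t > 1\<close> the pair \<open>a = ln t / (t - 1)\<close>, \<open>b = t a\<close> satisfies
  \<open>ln a - a = ln b - b\<close>, so \<open>l a\<close> and \<open>l b\<close> are the two solutions for a common level.\<close>
lemma ratio_attains:
  assumes \<beta>: "\<beta> > 0" and t: "1 < t"
  obtains y where "y < g \<beta>" "ratio \<beta> y = t"
proof -
  define a where "a = ln t / (t - 1)"
  define b where "b = t * a"
  have "ln t - t < ln 1 - 1"
    using monotone_onD[OF ln_minus_strict_antimono_on, of 1 t] t by simp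
  moreover have "ln (1/t) - 1/t < ln 1 - 1"
    using strict_mono_onD[OF ln_minus_strict_mono_on, of "1/t" 1] t by simp
  ultimately have a: "0 < a" "a < 1" and b: "1 < b"
    using t by (auto simp: a_def b_def ln_div field_simps)
  have "b - a = (t - 1) * a" by (simp add: b_def algebra_simps)
  also have "\<dots> = ln t" using t by (simp add: a_def)
  finally have "b - a = ln t" .
  moreover have "ln b = ln t + ln a" using t a by (simp add: b_def ln_mult_pos)
  ultimately have level: "ln b - b = ln a - a" by simp
  define y where "y = G \<beta> (l \<beta> * a)"
  have "y = G \<beta> (l \<beta> * b)" using G_l_mult[OF \<beta>] a b level by (simp add: y_def)
  then have "ratio \<beta> y = t"
    using H_G_l_mult[OF \<beta> a(1)] K_G_l_mult[OF \<beta>] a b l_pos[OF \<beta>]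
    by (simp add: ratio_def y_def b_def)
  moreover have "y < g \<beta>"
    using strict_mono_onD[OF ln_minus_strict_mono_on, of a 1] G_l_mult[OF \<beta> a(1)] a \<beta>
    by (simp add: y_def divide_neg_pos)
  ultimately show thesis using that by blast
qed

lemma ratio_image_lessThan:
  assumes \<beta>: "\<beta> > 0" and y0: "y0 \<le> g \<beta>"
  shows "ratio \<beta> ` {..<y0} \<subseteq> {ratio \<beta> y0..}"
  using monotone_onD[OF ratio_strict_antimono_on[OF \<beta>], of _ y0] y0
  by (force simp: image_subset_iff)

lemma ratio_image_greaterThanAtMost:
  assumes \<beta>: "\<beta> > 0"
  shows "ratio \<beta> ` {y0<..g \<beta>} \<subseteq> {1..ratio \<beta> y0}"
  using monotone_onD[OF ratio_strict_antimono_on[OF \<beta>], of y0] ratio_ge_one[OF \<beta>]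
  by (force simp: image_subset_iff)

definition chi :: "real \<Rightarrow> real \<Rightarrow> real" where
  "chi k t = (if t = 1 then k + 1 else (k + t) * ln t / (t - 1))"

lemma S_eq_chi_ratio:
  assumes \<beta>: "\<beta> > 0" and y: "y \<le> g \<beta>"
  shows "S k \<beta> y = l \<beta> * chi k (ratio \<beta> y)"
proof -
  obtain a b where a: "0 < a" "a \<le> 1" and b: "1 \<le> b" and level: "ln b - b = ln a - a"
    and HK: "H \<beta> y = l \<beta> * a" "K \<beta> y = l \<beta> * b"
    using H_K_normal_form[OF \<beta> y] by metis
  define t where "t = b / a"
  have ratio: "ratio \<beta> y = t" using HK a l_pos[OF \<beta>] by (simp add: ratio_def t_def)
  have b_eq: "b = t * a" using a by (simp add: t_def)
  show ?thesis
  proof (cases "t = 1")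
    case True
    then have "a = 1" "b = 1" using a b b_eq by auto
    then show ?thesis using HK ratio True by (simp add: S_def chi_def algebra_simps)
  next
    case False
    have "ln t = b - a" using a b level by (simp add: t_def ln_div)
    also have "\<dots> = a * (t - 1)" by (simp add: b_eq algebra_simps)
    finally have "chi k t = (k + t) * a" using False by (simp add: chi_def)
    then show ?thesis using HK ratio b_eq by (simp add: S_def algebra_simps)
  qed
qed

lemma chi_has_real_derivative:
  assumes t: "1 < t"
  shows "(chi k has_real_derivative ((k + t) * (t - 1) / t - (k + 1) * ln t) / (t - 1)^2) (at t)"
proof (rule has_field_derivative_transform_within_open[where S = "{1<..}"])
  show "((\<lambda>t. (k + t) * ln t / (t - 1)) has_real_derivative
      ((k + t) * (t - 1) / t - (k + 1) * ln t) / (t - 1)^2) (at t)"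
    using t by (auto intro!: derivative_eq_intros simp: field_simps power2_eq_square)
qed (use t in \<open>auto simp: chi_def\<close>)

lemma chi_continuous_on: "continuous_on {1..} (chi k)"
proof (rule continuous_on_eq_continuous_within[THEN iffD2], intro ballI)
  fix t :: real assume "t \<in> {1..}"
  then consider "t = 1" | "1 < t" by force
  then show "continuous (at t within {1..}) (chi k)"
  proof cases
    case 1
    have "((\<lambda>t. (k + t) * ln t / (t - 1)) \<longlongrightarrow> k + 1) (at_right 1)" by real_asymp
    then have "(chi k \<longlongrightarrow> k + 1) (at_right 1)"
      by (rule Lim_transform_eventually)
        (use eventually_at_right_less[of 1] in \<open>eventually_elim, simp add: chi_def\<close>)
    then show ?thesis
      by (simp add: 1 continuous_within at_within_Ici_at_right chi_def)
  next
    case 2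
    show ?thesis
      by (rule continuous_at_imp_continuous_at_within[OF DERIV_isCont[OF chi_has_real_derivative[OF 2]]])
  qed
qed

lemma two_ln_less_diff_inverse:
  fixes t :: real
  assumes "1 < t"
  shows "2 * ln t < t - 1 / t"
proof -
  have "strict_mono_on {1..} (\<lambda>t::real. t - 1 / t - 2 * ln t)"
  proof (rule strict_mono_on_if_deriv_pos)
    fix x :: real assume "x \<in> interior {1..}"
    then have x: "1 < x" by simp
    have "((\<lambda>t. t - 1 / t - 2 * ln t) has_real_derivative (x - 1)^2 / x^2) (at x)"
      using x by (auto intro!: derivative_eq_intros simp: field_simps power2_eq_square)
    then show "\<exists>d. ((\<lambda>t. t - 1 / t - 2 * ln t) has_real_derivative d) (at x) \<and> d > 0"
      using x by force
  qed (auto intro!: continuous_intros)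
  then show ?thesis using strict_mono_onD[of "{1..}" _ 1 t] assms by fastforce
qed

lemma chi1_strict_mono_on: "strict_mono_on {1..} (chi 1)"
proof (rule strict_mono_on_if_deriv_pos)
  fix t :: real assume "t \<in> interior {1..}"
  then have t: "1 < t" by simp
  have "(1 + t) * (t - 1) / t - (1 + 1) * ln t = t - 1 / t - 2 * ln t"
    using t by (simp add: field_simps)
  then show "\<exists>d. (chi 1 has_real_derivative d) (at t) \<and> d > 0"
    using chi_has_real_derivative[OF t, of 1] two_ln_less_diff_inverse[OF t] t by force
qed (simp_all add: chi_continuous_on)

text \<open>\<open>(t - 1)\<^sup>2\<close> times the derivative of \<open>chi 2\<close> at \<open>t\<close> is \<open>- rho t\<close>.\<close>
definition rho :: "real \<Rightarrow> real" where
  "rho t = 3 * ln t - t - 1 + 2 / t"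

lemma rho_has_real_derivative:
  "0 < t \<Longrightarrow> (rho has_real_derivative - (t - 1) * (t - 2) / t^2) (at t)"
  unfolding rho_def[abs_def]
  by (auto intro!: derivative_eq_intros simp: field_simps power2_eq_square)

lemma rho_continuous_on: "continuous_on {1..} rho"
  unfolding rho_def[abs_def] by (auto intro!: continuous_intros)

lemma rho_strict_mono_on: "strict_mono_on {1..2} rho"
proof (rule strict_mono_on_if_deriv_pos)
  fix t :: real assume "t \<in> interior {1..2}"
  then have "1 < t" "t < 2" by auto
  then show "\<exists>d. (rho has_real_derivative d) (at t) \<and> d > 0"
    using rho_has_real_derivative[of t] by (force intro: divide_pos_pos mult_neg_neg)
qed (auto intro: continuous_on_subset[OF rho_continuous_on])

lemma rho_strict_antimono_on: "strict_antimono_on {2..} rho"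
proof (rule strict_antimono_on_if_deriv_neg)
  fix t :: real assume "t \<in> interior {2..}"
  then have "2 < t" by auto
  then show "\<exists>d. (rho has_real_derivative d) (at t) \<and> d < 0"
    using rho_has_real_derivative[of t] by (force intro: divide_neg_pos mult_neg_pos)
qed (auto intro: continuous_on_subset[OF rho_continuous_on])

lemma rho_sign_change:
  obtains t0 where "1 < t0" "\<And>t. 1 < t \<Longrightarrow> t < t0 \<Longrightarrow> rho t > 0" "\<And>t. t0 < t \<Longrightarrow> rho t < 0"
proof -
  have rho_1: "rho 1 = 0" by (simp add: rho_def)
  have rho_2: "rho 2 > 0" using strict_mono_onD[OF rho_strict_mono_on, of 1 2] rho_1 by simp
  have "ln (16::real) = 4 * ln 2" using ln_realpow[of 2 4] by simp
  then have "rho 16 < 0" using ln_2_less_1 by (simp add: rho_def)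
  then obtain t0 where t0: "2 \<le> t0" "t0 \<le> 16" "rho t0 = 0"
    using IVT2'[of rho 16 0 2] rho_2 continuous_on_subset[OF rho_continuous_on, of "{2..16}"]
    by auto
  have "2 < t0" using t0 rho_2 by (cases "t0 = 2") auto
  show thesis
  proof (rule that)
    show "1 < t0" using \<open>2 < t0\<close> by simp
  next
    fix t assume "1 < t" "t < t0"
    then show "rho t > 0"
      using strict_mono_onD[OF rho_strict_mono_on, of 1 t] rho_1
        monotone_onD[OF rho_strict_antimono_on, of t t0] t0
      by (cases "t \<le> 2") auto
  next
    fix t assume "t0 < t"
    then show "rho t < 0" using monotone_onD[OF rho_strict_antimono_on, of t0 t] t0 by auto
  qed
qed

lemma chi2_valley:
  obtains t0 where "1 < t0" "strict_antimono_on {1..t0} (chi 2)" "strict_mono_on {t0..} (chi 2)"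
proof -
  obtain t0 where t0: "1 < t0" "\<And>t. 1 < t \<Longrightarrow> t < t0 \<Longrightarrow> rho t > 0"
    "\<And>t. t0 < t \<Longrightarrow> rho t < 0"
    using rho_sign_change by blast
  have deriv: "(chi 2 has_real_derivative - rho t / (t - 1)^2) (at t)" if "1 < t" for t
  proof -
    have "(2 + t) * (t - 1) / t - (2 + 1) * ln t = - rho t"
      using that by (simp add: rho_def field_simps)
    then show ?thesis using chi_has_real_derivative[OF that, of 2] by simp
  qed
  have "strict_antimono_on {1..t0} (chi 2)"
  proof (rule strict_antimono_on_if_deriv_neg)
    fix t assume "t \<in> interior {1..t0}"
    then have "1 < t" "t < t0" by auto
    then show "\<exists>d. (chi 2 has_real_derivative d) (at t) \<and> d < 0"
      using deriv t0(2) by (intro exI[of _ "- rho t / (t - 1)^2"]) simp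
  qed (auto intro: continuous_on_subset[OF chi_continuous_on])
  moreover have "strict_mono_on {t0..} (chi 2)"
  proof (rule strict_mono_on_if_deriv_pos)
    fix t assume "t \<in> interior {t0..}"
    then have "1 < t" "t0 < t" using t0(1) by auto
    then show "\<exists>d. (chi 2 has_real_derivative d) (at t) \<and> d > 0"
      using deriv t0(3) by (intro exI[of _ "- rho t / (t - 1)^2"]) (simp add: divide_neg_pos)
  qed (use t0(1) in \<open>auto intro: continuous_on_subset[OF chi_continuous_on]\<close>)
  ultimately show thesis using that t0(1) by blast
qed

lemma S_strict_antimono_on_if_chi_strict_mono_on:
  assumes \<beta>: "\<beta> > 0" and Y: "Y \<subseteq> {..g \<beta>}" "ratio \<beta> ` Y \<subseteq> A"
    and chi: "strict_mono_on A (chi k)"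
  shows "strict_antimono_on Y (S k \<beta>)"
proof (rule monotone_onI)
  fix y1 y2 assume y: "y1 \<in> Y" "y2 \<in> Y" "y1 < y2"
  have "ratio \<beta> y2 < ratio \<beta> y1"
    using monotone_onD[OF ratio_strict_antimono_on[OF \<beta>]] y Y by auto
  then have "chi k (ratio \<beta> y2) < chi k (ratio \<beta> y1)"
    using strict_mono_onD[OF chi] y Y by blast
  then show "S k \<beta> y1 > S k \<beta> y2"
    using S_eq_chi_ratio[OF \<beta>] y Y l_pos[OF \<beta>] by auto
qed

lemma S_strict_mono_on_if_chi_strict_antimono_on:
  assumes \<beta>: "\<beta> > 0" and Y: "Y \<subseteq> {..g \<beta>}" "ratio \<beta> ` Y \<subseteq> A"
    and chi: "strict_antimono_on A (chi k)"
  shows "strict_mono_on Y (S k \<beta>)"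
proof (rule strict_mono_onI)
  fix y1 y2 assume y: "y1 \<in> Y" "y2 \<in> Y" "y1 < y2"
  have "ratio \<beta> y2 < ratio \<beta> y1"
    using monotone_onD[OF ratio_strict_antimono_on[OF \<beta>]] y Y by auto
  then have "chi k (ratio \<beta> y1) < chi k (ratio \<beta> y2)"
    using monotone_onD[OF chi] y Y by blast
  then show "S k \<beta> y1 < S k \<beta> y2"
    using S_eq_chi_ratio[OF \<beta>] y Y l_pos[OF \<beta>] by auto
qed

theorem lemma5p6:
  fixes \<beta> :: real
  assumes "\<beta> > 2"
  shows "strict_antimono_on {..g \<beta>} (S 1 \<beta>) \<and>
    (\<exists>gt. gt < g \<beta> \<and> strict_antimono_on {..<gt} (S 2 \<beta>)
                        \<and> strict_mono_on {gt<..g \<beta>} (S 2 \<beta>))"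
proof -
  have \<beta>: "\<beta> > 0" using assms by simp
  obtain t0 where "1 < t0" and chi_dec: "strict_antimono_on {1..t0} (chi 2)"
    and chi_inc: "strict_mono_on {t0..} (chi 2)"
    using chi2_valley by blast
  obtain gt where gt: "gt < g \<beta>" "ratio \<beta> gt = t0"
    using ratio_attains[OF \<beta> \<open>1 < t0\<close>] by blast
  have "strict_antimono_on {..g \<beta>} (S 1 \<beta>)"
    using ratio_ge_one[OF \<beta>]
    by (intro S_strict_antimono_on_if_chi_strict_mono_on[OF \<beta> _ _ chi1_strict_mono_on]) auto
  moreover have "strict_antimono_on {..<gt} (S 2 \<beta>)"
    using gt ratio_image_lessThan[OF \<beta>, of gt]
    by (intro S_strict_antimono_on_if_chi_strict_mono_on[OF \<beta> _ _ chi_inc]) auto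
  moreover have "strict_mono_on {gt<..g \<beta>} (S 2 \<beta>)"
    using gt ratio_image_greaterThanAtMost[OF \<beta>, of gt]
    by (intro S_strict_mono_on_if_chi_strict_antimono_on[OF \<beta> _ _ chi_dec]) auto
  ultimately show ?thesis using gt(1) by blast
qed

end
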